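(* Let $n=p_1^{m_1}\cdots p_k^{m_k}$ with $m_i>1$ for at least one $i$. Then the adjacency spectrum (as a multiset) of $\mathcal E_{\mathbb Z_n}(\mathscr U)$ consists of the eigenvalue $0$ with multiplicity $T-m-(2^k-2)$ together with the $2^k-2$ eigenvalues of the symmetric matrix $C_A(\mathscr G)$ indexed by $V(\mathscr G)$, with entries $(C_A)_{II}=0$, $(C_A)_{IJ}=\sqrt{n_In_J}$ if $I\sim J$ in $\mathscr G$, and $(C_A)_{IJ}=0$ otherwise.
   Context: Primes $p_1<\dots<p_k$, positive integers $m_i$. Nonzero proper ideals of $\mathbb Z_n$ are uniquely $\langle p_1^{r_1}\cdots p_k^{r_k}\rangle$, $0\le r_i\le m_i$, $(r_i)\ne(0,\dots,0),(m_1,\dots,m_k)$; essential iff $r_j\ne m_j$ for all $j$. Essential ideal graph $\mathcal E_{\mathbb Z_n}$: vertices nonzero proper ideals, distinct $I,K$ adjacent iff $I+K$ essential. $T=\prod_i(m_i+1)-2$ is the number of vertices, $m=\prod_i m_i-1$ the number of essential nonzero proper ideals. $\mathscr U$ = nonzero proper nonessential ideals, $\mathcal E_{\mathbb Z_n}(\mathscr U)$ the induced subgraph. For $I\in\mathscr U$, $\Xi_I=\{i:r_i=m_i\}$; $[I]=\{J\in\mathscr U:\Xi_J=\Xi_I\}$. $\mathscr G$: vertex set the $2^k-2$ ideals $\langle\prod_{i\in S}p_i^{m_i}\rangle$, $S$ nonempty proper subset of $\{1,\dots,k\}$, $I\sim J$ iff $\Xi_I\cap\Xi_J=\emptyset$.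 For $I\in V(\mathscr G)$, $n_I=|[I]|=\prod_{i\notin\Xi_I}m_i$. *)

theory Defs
  imports Complex_Main "HOL-Computational_Algebra.Primes" "Jordan_Normal_Form.Char_Poly"
begin

definition zn_ideal :: "nat \<Rightarrow> nat set \<Rightarrow> bool" where
  "zn_ideal n I \<longleftrightarrow> I \<subseteq> {0..<n} \<and> 0 \<in> I \<and>
     (\<forall>a\<in>I. \<forall>b\<in>I. (a + b) mod n \<in> I) \<and>
     (\<forall>a\<in>I. (n - a) mod n \<in> I) \<and>
     (\<forall>a\<in>I. \<forall>r\<in>{0..<n}. (r * a) mod n \<in> I)"

definition zn_essential :: "nat \<Rightarrow> nat set \<Rightarrow> bool" where
  "zn_essential n I \<longleftrightarrow> zn_ideal n I \<and>
     (\<forall>K. zn_ideal n K \<and> K \<noteq> {0} \<longrightarrow> I \<inter> K \<noteq> {0})"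

definition zn_ideal_sum :: "nat \<Rightarrow> nat set \<Rightarrow> nat set \<Rightarrow> nat set" where
  "zn_ideal_sum n I K = {(a + b) mod n | a b. a \<in> I \<and> b \<in> K}"

definition ess_vertices :: "nat \<Rightarrow> nat set set" where
  "ess_vertices n = {I. zn_ideal n I \<and> I \<noteq> {0} \<and> I \<noteq> {0..<n}}"

definition noness_vertices :: "nat \<Rightarrow> nat set set" where
  "noness_vertices n = {I \<in> ess_vertices n. \<not> zn_essential n I}"

definition ess_adj :: "nat \<Rightarrow> nat set \<Rightarrow> nat set \<Rightarrow> bool" where
  "ess_adj n I K \<longleftrightarrow> I \<noteq> K \<and> zn_essential n (zn_ideal_sum n I K)"

definition index_mat :: "'v set \<Rightarrow> ('v \<Rightarrow> 'v \<Rightarrow> real) \<Rightarrow> complex mat" where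
  "index_mat V A = (let xs = (SOME xs. distinct xs \<and> set xs = V) in
     mat (card V) (card V) (\<lambda>(i,j). complex_of_real (A (xs ! i) (xs ! j))))"

definition mat_spectrum :: "'v set \<Rightarrow> ('v \<Rightarrow> 'v \<Rightarrow> real) \<Rightarrow> complex multiset" where
  "mat_spectrum V A = proots (char_poly (index_mat V A))"

text \<open>V(G) is indexed by the nonempty proper subsets S = Xi_I of {0..<k}.\<close>
definition G_vertices :: "nat \<Rightarrow> nat set set" where
  "G_vertices k = {S. S \<noteq> {} \<and> S \<subset> {..<k}}"

definition n_class :: "nat \<Rightarrow> (nat \<Rightarrow> nat) \<Rightarrow> nat set \<Rightarrow> nat" where
  "n_class k m S = (\<Prod>i\<in>{..<k} - S. m i)"

definition C_A :: "nat \<Rightarrow> (nat \<Rightarrow> nat) \<Rightarrow> nat set \<Rightarrow> nat set \<Rightarrow> real" where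
  "C_A k m S S' = (if S \<noteq> S' \<and> S \<inter> S' = {}
      then sqrt (real (n_class k m S * n_class k m S')) else 0)"

end

theory Submission
  imports Defs
begin

(*
  Every ideal of Z_n is the set (d) of multiples of a divisor d of n, i.e. of an exponent vector
  r <= m, and (d) + (e) = (gcd d e).  The ideal (d) is essential iff no exponent of d is full, so
  the set Xi of full exponents of a sum is the intersection of those of the summands.  Hence, on
  the nonessential ideals, adjacency depends only on Xi: the adjacency matrix A is the blow-up of
  the disjointness matrix of the graph G in which the vertex S is replaced by an independent class
  of n_S vertices.  Writing N for the class-incidence matrix with columns normalised to unit length,
  A = N C N^T where C = C_A(G) and N^T N = I, so Sylvester's identity
  x^|G| chi(N (C N^T)) = x^|U| chi((C N^T) N) yields the spectrum of C together with |U| - |G|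
  zeros, and |U| - |G| = T - m - (2^k - 2).
*)

section \<open>Ideals of Z_n\<close>

definition zn_multiples :: "nat \<Rightarrow> nat \<Rightarrow> nat set" where
  "zn_multiples n d = {x. x < n \<and> d dvd x}"

lemma zn_ideal_multiples:
  assumes "d dvd n" "0 < n"
  shows "zn_ideal n (zn_multiples n d)"
  unfolding zn_ideal_def zn_multiples_def using assms
  by (auto simp: dvd_mod_iff intro!: dvd_diff_nat)

lemma zn_multiples_self: "0 < n \<Longrightarrow> zn_multiples n n = {0}"
  unfolding zn_multiples_def by auto

lemma zn_idealD:
  assumes "zn_ideal n I"
  shows "I \<subseteq> {0..<n}" "0 \<in> I" "\<And>a. a \<in> I \<Longrightarrow> (n - a) mod n \<in> I"
    "\<And>a b. a \<in> I \<Longrightarrow> b \<in> I \<Longrightarrow> (a + b) mod n \<in> I"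
    "\<And>a r. a \<in> I \<Longrightarrow> r < n \<Longrightarrow> (r * a) mod n \<in> I"
  using assms unfolding zn_ideal_def by auto

lemma zn_ideal_diff:
  assumes I: "zn_ideal n I" and ab: "a \<in> I" "b \<in> I" "b \<le> a"
  shows "a - b \<in> I"
proof (cases "b = 0")
  case False
  have "a < n" "b < n" using zn_idealD(1)[OF I] ab by auto
  moreover have "(n - b) mod n \<in> I" using zn_idealD(3)[OF I ab(2)] .
  ultimately have "n - b \<in> I" using False by simp
  hence "(a + (n - b)) mod n \<in> I" using zn_idealD(4)[OF I ab(1)] by blast
  moreover have "a + (n - b) = (a - b) + n" using \<open>b < n\<close> ab(3) by simp
  ultimately show ?thesis using \<open>a < n\<close> by (metis mod_add_self2 mod_less less_imp_diff_less)
qed (use ab in simp)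

lemma zn_ideal_mult:
  assumes I: "zn_ideal n I" and a: "a \<in> I" and lt: "q * a < n"
  shows "q * a \<in> I"
proof (cases "a = 0")
  case False
  have "q \<le> q * a" using False by simp
  hence "q < n" using lt by (rule le_less_trans)
  hence "(q * a) mod n \<in> I" using zn_idealD(5)[OF I a] by blast
  thus ?thesis using lt by simp
qed (use a in simp)

lemma zn_ideal_eq_multiples:
  assumes I: "zn_ideal n I" and n: "0 < n"
  obtains d where "d dvd n" "I = zn_multiples n d"
proof (cases "I = {0}")
  case True
  show ?thesis using zn_multiples_self[OF n] True by (intro that[of n]) simp_all
next
  case False
  note sub = zn_idealD(1)[OF I] and z = zn_idealD(2)[OF I] and neg = zn_idealD(3)[OF I]
  obtain x where x: "x \<in> I" "x > 0" using False z by blast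
  define d where "d = (LEAST x. x \<in> I \<and> x > 0)"
  have d: "d \<in> I" "d > 0" using LeastI[of "\<lambda>x. x \<in> I \<and> x > 0" x] x unfolding d_def by auto
  have d_min: "y = 0" if "y \<in> I" "y < d" for y
    using that Least_le[of "\<lambda>x. x \<in> I \<and> x > 0" y] unfolding d_def by fastforce
  have mod_d: "a mod d = a - a div d * d" for a by (simp add: minus_div_mult_eq_mod)
  \<comment> \<open>Euclidean division by the least positive element stays inside \<open>I\<close>.\<close>
  have "d dvd a" if "a \<in> I" for a
  proof -
    have "a < n" using that sub by auto
    hence "a div d * d \<in> I" by (intro zn_ideal_mult[OF I d(1)]) (use div_times_less_eq_dividend[of a d] in linarith)
    hence "a mod d \<in> I" unfolding mod_d by (intro zn_ideal_diff[OF I that]) simp_all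
    from d_min[OF this mod_less_divisor[OF d(2)]] show ?thesis by (simp add: dvd_eq_mod_eq_0)
  qed
  moreover have "d dvd n"
  proof (rule ccontr)
    assume nd: "\<not> d dvd n"
    have "n div d * d \<noteq> n" using nd by (metis dvd_triv_right)
    hence "n div d * d < n" using div_times_less_eq_dividend[of n d] by linarith
    hence "n div d * d \<in> I" by (intro zn_ideal_mult[OF I d(1)])
    have "d < n" using d(1) sub by auto
    hence "0 < n div d * d" using d(2) by (simp add: div_greater_zero_iff)
    hence "n mod d \<in> I" using neg[OF \<open>n div d * d \<in> I\<close>] \<open>n div d * d < n\<close> unfolding mod_d by simp
    from d_min[OF this mod_less_divisor[OF d(2)]] nd show False by (simp add: dvd_eq_mod_eq_0)
  qed
  moreover have "zn_multiples n d \<subseteq> I"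
    using zn_ideal_mult[OF I d(1)] unfolding zn_multiples_def by (auto simp: mult.commute)
  ultimately have "I = zn_multiples n d" using sub unfolding zn_multiples_def by auto
  with \<open>d dvd n\<close> show ?thesis by (rule that)
qed

lemma zn_multiples_inj:
  assumes "0 < n" "d dvd n" "e dvd n" "zn_multiples n d = zn_multiples n e"
  shows "d = e"
proof -
  have "e dvd d" if "d dvd n" "e dvd n" "zn_multiples n d = zn_multiples n e" for d e
  proof (cases "d = n")
    case False
    hence "d \<in> zn_multiples n d" using that assms(1) dvd_imp_le unfolding zn_multiples_def by fastforce
    thus ?thesis using that unfolding zn_multiples_def by auto
  qed (use that in simp)
  from this[OF assms(2,3,4)] this[OF assms(3,2) assms(4)[symmetric]] show ?thesis by (intro dvd_antisym)
qed

lemma zn_multiples_eq_zero_iff: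
  assumes "0 < n" "d dvd n"
  shows "zn_multiples n d = {0} \<longleftrightarrow> d = n"
  using zn_multiples_inj[OF assms(1,2) dvd_refl] zn_multiples_self[OF assms(1)] by auto

lemma zn_ideal_sum_multiples:
  assumes n: "0 < n" and de: "d dvd n" "e dvd n"
  shows "zn_ideal_sum n (zn_multiples n d) (zn_multiples n e) = zn_multiples n (gcd d e)"
proof
  show "zn_ideal_sum n (zn_multiples n d) (zn_multiples n e) \<subseteq> zn_multiples n (gcd d e)"
  proof
    fix z assume "z \<in> zn_ideal_sum n (zn_multiples n d) (zn_multiples n e)"
    then obtain a b where z: "z = (a + b) mod n" "d dvd a" "e dvd b"
      unfolding zn_ideal_sum_def zn_multiples_def by auto
    have "gcd d e dvd a + b" using z by (meson dvd_add dvd_trans gcd_dvd1 gcd_dvd2)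
    moreover have "gcd d e dvd n" using de by (meson dvd_trans gcd_dvd1)
    ultimately show "z \<in> zn_multiples n (gcd d e)" unfolding zn_multiples_def using z n by (simp add: dvd_mod_iff)
  qed
next
  show "zn_multiples n (gcd d e) \<subseteq> zn_ideal_sum n (zn_multiples n d) (zn_multiples n e)"
  proof
    fix x assume "x \<in> zn_multiples n (gcd d e)"
    hence "gcd d e dvd x" "x < n" unfolding zn_multiples_def by auto
    then obtain t where x: "x = t * gcd d e" "x < n" by (metis dvd_def mult.commute)
    have "d \<noteq> 0" using de n by auto
    then obtain u v where uv: "d * u = e * v + gcd d e" using bezout_nat by blast
    \<comment> \<open>Bezout: \<open>x = t d u - t e v\<close>, and \<open>-t e v\<close> is represented in \<open>Z_n\<close> by \<open>n - (t e v mod n)\<close>.\<close>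
    define y where "y = (t * e * v) mod n"
    have a: "(t * d * u) mod n \<in> zn_multiples n d" unfolding zn_multiples_def using n by (simp add: dvd_mod_iff[OF de(1)])
    have y: "y < n" "e dvd y" unfolding y_def using n by (simp_all add: dvd_mod_iff[OF de(2)])
    hence b: "(n - y) mod n \<in> zn_multiples n e" unfolding zn_multiples_def using n de(2)
      by (simp add: dvd_mod_iff[OF de(2)])
    have "t * (d * u) = t * (e * v) + x" using uv x(1) by (simp add: distrib_left)
    hence "t * d * u = t * e * v + x" by (simp only: mult.assoc)
    hence "(t * d * u) mod n = (y + x) mod n" unfolding y_def mod_add_left_eq by (simp only:)
    hence "((t * d * u) mod n + (n - y) mod n) mod n = ((y + x) + (n - y)) mod n"
      by (simp only: mod_add_eq)
    also have "(y + x) + (n - y) = x + n" using y by simp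
    finally have "((t * d * u) mod n + (n - y) mod n) mod n = x" using x by simp
    thus "x \<in> zn_ideal_sum n (zn_multiples n d) (zn_multiples n e)"
      unfolding zn_ideal_sum_def using a b by blast
  qed
qed

section \<open>Ideals of Z_n for n = p_1^m_1 \<cdots> p_k^m_k\<close>

locale factored_modulus =
  fixes k :: nat and p m :: "nat \<Rightarrow> nat" and n :: nat
  assumes primes: "\<forall>i<k. prime (p i)"
    and incr: "\<forall>i j. i < j \<and> j < k \<longrightarrow> p i < p j"
    and mpos: "\<forall>i<k. m i > 0"
    and n_def: "n = (\<Prod>i<k. p i ^ m i)"
begin

definition prime_power_prod :: "(nat \<Rightarrow> nat) \<Rightarrow> nat" where
  "prime_power_prod r = (\<Prod>i<k. p i ^ r i)"

lemma prime_p: "i < k \<Longrightarrow> prime (p i)"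
  using primes by blast

lemma p_pos: "i < k \<Longrightarrow> 0 < p i"
  using prime_p prime_gt_0_nat by blast

lemma n_eq: "n = prime_power_prod m"
  unfolding n_def prime_power_prod_def ..

lemma prime_power_prod_pos: "0 < prime_power_prod r"
  unfolding prime_power_prod_def by (intro prod_pos) (simp add: p_pos)

lemma n_pos: "0 < n"
  using prime_power_prod_pos n_eq by simp

lemma multiplicity_prime_power_prod:
  assumes j: "j < k"
  shows "multiplicity (p j) (prime_power_prod r) = r j"
proof -
  have "multiplicity (p j) (p i ^ r i) = (if i = j then r i else 0)" if i: "i < k" for i
  proof (cases "i = j")
    case False
    hence "p i \<noteq> p j" using incr i j by (metis linorder_neqE_nat less_irrefl)
    hence "multiplicity (p j) (p i) = 0" using prime_p i j by (simp add: prime_multiplicity_other)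
    thus ?thesis using False prime_p[OF i] prime_p[OF j]
      by (simp add: prime_elem_multiplicity_power_distrib prime_gt_0_nat)
  qed (simp add: prime_p j)
  hence "multiplicity (p j) (prime_power_prod r) = (\<Sum>i<k. if i = j then r i else 0)"
    unfolding prime_power_prod_def using prime_p j
    by (subst prime_elem_multiplicity_prod_distrib) (auto dest: p_pos)
  also have "\<dots> = r j" using j by simp
  finally show ?thesis .
qed

lemma multiplicity_prime_power_prod_other:
  assumes q: "prime q" "q \<notin> p ` {..<k}"
  shows "multiplicity q (prime_power_prod r) = 0"
proof -
  have "multiplicity q (p i ^ r i) = 0" if "i < k" for i
  proof -
    have "q \<noteq> p i" using q(2) that by auto
    hence "multiplicity q (p i) = 0" using q(1) prime_p[OF that] by (simp add: prime_multiplicity_other)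
    thus ?thesis using q(1) p_pos[OF that] by (simp add: prime_elem_multiplicity_power_distrib)
  qed
  thus ?thesis unfolding prime_power_prod_def using q
    by (subst prime_elem_multiplicity_prod_distrib) (auto dest: p_pos)
qed

lemma prime_power_prod_dvdI:
  assumes "d \<noteq> 0" and le: "\<And>j. j < k \<Longrightarrow> r j \<le> multiplicity (p j) d"
  shows "prime_power_prod r dvd d"
proof (rule multiplicity_le_imp_dvd)
  fix q :: nat assume "prime q"
  thus "multiplicity q (prime_power_prod r) \<le> multiplicity q d"
    using le multiplicity_prime_power_prod multiplicity_prime_power_prod_other by (cases "q \<in> p ` {..<k}") auto
qed (use prime_power_prod_pos in simp)

lemma dvd_prime_power_prodI:
  assumes d: "d dvd n" and le: "\<And>j. j < k \<Longrightarrow> multiplicity (p j) d \<le> r j"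
  shows "d dvd prime_power_prod r"
proof (rule multiplicity_le_imp_dvd)
  show "d \<noteq> 0" using d n_pos by auto
  fix q :: nat assume q: "prime q"
  show "multiplicity q d \<le> multiplicity q (prime_power_prod r)"
  proof (cases "q \<in> p ` {..<k}")
    case False
    have "multiplicity q d \<le> multiplicity q n" using d n_pos by (intro dvd_imp_multiplicity_le) auto
    thus ?thesis using multiplicity_prime_power_prod_other[OF q False] n_eq by simp
  qed (use le multiplicity_prime_power_prod in auto)
qed

lemma prime_power_prod_dvd_mono:
  "(\<And>i. i < k \<Longrightarrow> r i \<le> s i) \<Longrightarrow> prime_power_prod r dvd prime_power_prod s"
  unfolding prime_power_prod_def by (intro prod_dvd_prod le_imp_power_dvd) simp

lemma multiplicity_divisor_le:
  assumes "d dvd n" "j < k"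
  shows "multiplicity (p j) d \<le> m j"
  using dvd_imp_multiplicity_le[OF assms(1), of "p j"] n_pos multiplicity_prime_power_prod[OF assms(2), of m]
  unfolding n_eq by simp

lemma divisor_eq_prime_power_prod:
  assumes "d dvd n"
  shows "d = prime_power_prod (\<lambda>i. multiplicity (p i) d)"
  using assms n_pos
  by (intro dvd_antisym dvd_prime_power_prodI prime_power_prod_dvdI) auto

lemma prime_power_dvd_iff:
  assumes "d \<noteq> 0" "j < k"
  shows "p j ^ e dvd d \<longleftrightarrow> e \<le> multiplicity (p j) d"
  using assms prime_p[OF assms(2)] by (intro power_dvd_iff_le_multiplicity) auto

lemma n_dvd_iff:
  assumes "d \<noteq> 0"
  shows "n dvd d \<longleftrightarrow> (\<forall>j<k. p j ^ m j dvd d)"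
proof
  assume "n dvd d"
  moreover have "p j ^ m j dvd n" if "j < k" for j
    using that multiplicity_prime_power_prod[OF that, of m] n_eq n_pos prime_power_dvd_iff by auto
  ultimately show "\<forall>j<k. p j ^ m j dvd d" by (meson dvd_trans)
next
  assume "\<forall>j<k. p j ^ m j dvd d"
  thus "n dvd d" unfolding n_eq using assms prime_power_dvd_iff by (intro prime_power_prod_dvdI) auto
qed

definition Xi :: "nat set \<Rightarrow> nat set" where
  "Xi I = {j. j < k \<and> (\<forall>x\<in>I. p j ^ m j dvd x)}"

lemma prime_power_dvd_n: "j < k \<Longrightarrow> p j ^ m j dvd n"
  using n_dvd_iff[of n] n_pos by simp

lemma Xi_zn_multiples:
  assumes d: "d dvd n"
  shows "Xi (zn_multiples n d) = {j. j < k \<and> p j ^ m j dvd d}"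
proof -
  have "(\<forall>x\<in>zn_multiples n d. p j ^ m j dvd x) \<longleftrightarrow> p j ^ m j dvd d" if j: "j < k" for j
  proof (cases "d = n")
    case False
    hence "d \<in> zn_multiples n d" using d n_pos dvd_imp_le unfolding zn_multiples_def by fastforce
    thus ?thesis unfolding zn_multiples_def using dvd_trans by blast
  qed (use prime_power_dvd_n[OF j] zn_multiples_self[OF n_pos] in simp)
  thus ?thesis unfolding Xi_def by blast
qed

lemma Xi_zn_ideal_sum:
  assumes I: "zn_ideal n I" and K: "zn_ideal n K"
  shows "Xi (zn_ideal_sum n I K) = Xi I \<inter> Xi K"
proof -
  have "(\<forall>x\<in>zn_ideal_sum n I K. q dvd x) \<longleftrightarrow> (\<forall>x\<in>I. q dvd x) \<and> (\<forall>x\<in>K. q dvd x)"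
    if q: "q dvd n" for q
  proof
    assume sum: "\<forall>x\<in>zn_ideal_sum n I K. q dvd x"
    have "a \<in> zn_ideal_sum n I K" if "a \<in> I" for a
      using that zn_idealD(1,2)[OF K] zn_idealD(1)[OF I] unfolding zn_ideal_sum_def
      by (intro CollectI exI[of _ a] exI[of _ 0]) auto
    moreover have "b \<in> zn_ideal_sum n I K" if "b \<in> K" for b
      using that zn_idealD(1,2)[OF I] zn_idealD(1)[OF K] unfolding zn_ideal_sum_def
      by (intro CollectI exI[of _ 0] exI[of _ b]) auto
    ultimately show "(\<forall>x\<in>I. q dvd x) \<and> (\<forall>x\<in>K. q dvd x)" using sum by blast
  next
    assume "(\<forall>x\<in>I. q dvd x) \<and> (\<forall>x\<in>K. q dvd x)"
    thus "\<forall>x\<in>zn_ideal_sum n I K. q dvd x"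
      unfolding zn_ideal_sum_def using q by (auto simp: dvd_mod_iff)
  qed
  thus ?thesis unfolding Xi_def using prime_power_dvd_n by auto
qed

lemma prime_power_prod_update_ne_n:
  assumes "j < k" "e < m j"
  shows "prime_power_prod (m(j := e)) \<noteq> n"
  using assms multiplicity_prime_power_prod[OF assms(1), of "m(j := e)"]
    multiplicity_prime_power_prod[OF assms(1), of m]
  unfolding n_eq by auto

text \<open>\<open>prime_power_prod (m(j := 0))\<close> is \<open>n / p_j^m_j\<close>, and \<open>prime_power_prod (m(j := m j - 1))\<close>
  is \<open>n / p_j\<close>.\<close>

lemma zn_multiples_inter_cofactor:
  assumes d: "d dvd n" and j: "j < k" "p j ^ m j dvd d"
  shows "zn_multiples n d \<inter> zn_multiples n (prime_power_prod (m(j := 0))) = {0}"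
proof -
  have "x = 0" if x: "x \<in> zn_multiples n d" "x \<in> zn_multiples n (prime_power_prod (m(j := 0)))" for x
  proof (rule ccontr)
    assume "x \<noteq> 0"
    have "p i ^ m i dvd x" if i: "i < k" for i
    proof (cases "i = j")
      case True thus ?thesis using j x unfolding zn_multiples_def by (auto intro: dvd_trans)
    next
      case False
      have "p i ^ m i dvd prime_power_prod (m(j := 0))"
        using prime_power_dvd_iff[OF _ i] multiplicity_prime_power_prod[OF i] False prime_power_prod_pos
        by (metis fun_upd_other less_irrefl order_refl)
      thus ?thesis using x unfolding zn_multiples_def by (auto intro: dvd_trans)
    qed
    hence "n dvd x" using n_dvd_iff[OF \<open>x \<noteq> 0\<close>] by blast
    thus False using x \<open>x \<noteq> 0\<close> unfolding zn_multiples_def by (auto dest: dvd_imp_le)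
  qed
  thus ?thesis unfolding zn_multiples_def using n_pos by auto
qed

lemma cofactor_in_zn_multiples:
  assumes c: "c dvd n" and j: "j < k" "\<not> p j ^ m j dvd c"
  shows "prime_power_prod (m(j := m j - 1)) \<in> zn_multiples n c"
proof -
  let ?x = "prime_power_prod (m(j := m j - 1))"
  have "c \<noteq> 0" using c n_pos by auto
  hence "multiplicity (p j) c < m j" using j prime_power_dvd_iff by (simp add: not_le)
  hence "c dvd ?x" using multiplicity_divisor_le[OF c] by (intro dvd_prime_power_prodI[OF c]) auto
  moreover have "?x dvd n" unfolding n_eq by (intro prime_power_prod_dvd_mono) simp
  moreover have "?x \<noteq> n" using j(1) mpos by (intro prime_power_prod_update_ne_n) auto
  ultimately show ?thesis unfolding zn_multiples_def using n_pos dvd_imp_le le_neq_implies_less by blast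
qed

lemma zn_essential_multiples_iff:
  assumes d: "d dvd n"
  shows "zn_essential n (zn_multiples n d) \<longleftrightarrow> Xi (zn_multiples n d) = {}"
proof
  assume ess: "zn_essential n (zn_multiples n d)"
  show "Xi (zn_multiples n d) = {}"
  proof (rule ccontr)
    assume "Xi (zn_multiples n d) \<noteq> {}"
    then obtain j where j: "j < k" "p j ^ m j dvd d" unfolding Xi_zn_multiples[OF d] by blast
    let ?e = "prime_power_prod (m(j := 0))"
    have e: "?e dvd n" unfolding n_eq by (intro prime_power_prod_dvd_mono) simp
    moreover have "?e \<noteq> n" using j(1) mpos by (intro prime_power_prod_update_ne_n) auto
    ultimately have "zn_ideal n (zn_multiples n ?e)" "zn_multiples n ?e \<noteq> {0}"
      using zn_ideal_multiples[OF e n_pos] zn_multiples_eq_zero_iff[OF n_pos e] by auto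
    thus False using ess zn_multiples_inter_cofactor[OF d j] unfolding zn_essential_def by blast
  qed
next
  assume Xi: "Xi (zn_multiples n d) = {}"
  show "zn_essential n (zn_multiples n d)"
    unfolding zn_essential_def
  proof (intro conjI allI impI)
    show "zn_ideal n (zn_multiples n d)" by (rule zn_ideal_multiples[OF d n_pos])
    fix K assume K: "zn_ideal n K \<and> K \<noteq> {0}"
    then obtain e where e: "e dvd n" "K = zn_multiples n e" using zn_ideal_eq_multiples n_pos by blast
    have "e \<noteq> n" using K e zn_multiples_self[OF n_pos] by auto
    hence "\<not> n dvd e" using e(1) by (blast intro: dvd_antisym)
    moreover have "e \<noteq> 0" using e(1) n_pos by auto
    ultimately obtain j where j: "j < k" "\<not> p j ^ m j dvd e" using n_dvd_iff by blast
    moreover have "\<not> p j ^ m j dvd d" using Xi j(1) unfolding Xi_zn_multiples[OF d] by blast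
    ultimately have "prime_power_prod (m(j := m j - 1)) \<in> zn_multiples n d \<inter> K"
      unfolding e(2) using cofactor_in_zn_multiples d e(1) by blast
    moreover have "prime_power_prod (m(j := m j - 1)) \<noteq> 0" using prime_power_prod_pos by (metis less_irrefl)
    ultimately show "zn_multiples n d \<inter> K \<noteq> {0}" by (metis singletonD)
  qed
qed

lemma zn_ideal_sum_ideal:
  assumes "zn_ideal n I" "zn_ideal n K"
  shows "zn_ideal n (zn_ideal_sum n I K)"
proof -
  obtain d e where "d dvd n" "I = zn_multiples n d" "e dvd n" "K = zn_multiples n e"
    using zn_ideal_eq_multiples[OF _ n_pos] assms by metis
  thus ?thesis using zn_ideal_sum_multiples n_pos zn_ideal_multiples
    by (metis dvd_trans gcd_dvd1)
qed

lemma zn_essential_iff: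
  assumes "zn_ideal n I"
  shows "zn_essential n I \<longleftrightarrow> Xi I = {}"
  using zn_ideal_eq_multiples[OF assms n_pos] zn_essential_multiples_iff by metis

lemma Xi_zero: "Xi {0} = {..<k}"
  unfolding Xi_def by auto

lemma Xi_full: "Xi {0..<n} = {}"
proof -
  have "\<not> p j ^ m j dvd 1" if "j < k" for j
    using that mpos prime_gt_1_nat[OF prime_p[OF that]] by (simp add: power_eq_1_iff)
  moreover have "zn_multiples n 1 = {0..<n}" unfolding zn_multiples_def by auto
  ultimately show ?thesis using Xi_zn_multiples[of 1] by simp
qed

lemma Xi_eq_all_iff:
  assumes I: "zn_ideal n I"
  shows "Xi I = {..<k} \<longleftrightarrow> I = {0}"
proof
  assume all: "Xi I = {..<k}"
  obtain d where d: "d dvd n" "I = zn_multiples n d" using zn_ideal_eq_multiples[OF I n_pos] .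
  have "d \<noteq> 0" using d(1) n_pos by auto
  moreover have "\<forall>j<k. p j ^ m j dvd d" using all unfolding d(2) Xi_zn_multiples[OF d(1)] by blast
  ultimately have "n dvd d" using n_dvd_iff by blast
  hence "d = n" using d(1) by (blast intro: dvd_antisym)
  thus "I = {0}" using d(2) zn_multiples_self[OF n_pos] by simp
qed (simp add: Xi_zero)

lemma noness_vertices_eq: "noness_vertices n = {I. zn_ideal n I \<and> Xi I \<in> G_vertices k}"
proof -
  have "Xi I \<subseteq> {..<k}" for I unfolding Xi_def by auto
  hence G: "Xi I \<in> G_vertices k \<longleftrightarrow> Xi I \<noteq> {} \<and> Xi I \<noteq> {..<k}" for I
    unfolding G_vertices_def by auto
  show ?thesis
  proof (intro equalityI subsetI)
    fix I assume "I \<in> noness_vertices n"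
    hence I: "zn_ideal n I" "I \<noteq> {0}" "\<not> zn_essential n I"
      unfolding noness_vertices_def ess_vertices_def by auto
    thus "I \<in> {I. zn_ideal n I \<and> Xi I \<in> G_vertices k}"
      using zn_essential_iff[OF I(1)] Xi_eq_all_iff[OF I(1)] G by auto
  next
    fix I assume "I \<in> {I. zn_ideal n I \<and> Xi I \<in> G_vertices k}"
    hence I: "zn_ideal n I" "Xi I \<noteq> {}" "Xi I \<noteq> {..<k}" using G by auto
    have "I \<noteq> {0}" "I \<noteq> {0..<n}" using I(2,3) Xi_zero Xi_full by auto
    thus "I \<in> noness_vertices n"
      using I zn_essential_iff[OF I(1)] unfolding noness_vertices_def ess_vertices_def by auto
  qed
qed

lemma ess_adj_iff:
  assumes I: "I \<in> noness_vertices n" and K: "K \<in> noness_vertices n"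
  shows "ess_adj n I K \<longleftrightarrow> Xi I \<inter> Xi K = {}"
proof -
  have ideals: "zn_ideal n I" "zn_ideal n K" and "Xi I \<noteq> {}"
    using I K unfolding noness_vertices_eq G_vertices_def by auto
  hence "Xi I \<inter> Xi K = {} \<Longrightarrow> I \<noteq> K" by auto
  thus ?thesis unfolding ess_adj_def
    using zn_essential_iff[OF zn_ideal_sum_ideal[OF ideals]] Xi_zn_ideal_sum[OF ideals] by auto
qed

lemma finite_noness_vertices: "finite (noness_vertices n)"
proof (rule finite_subset)
  show "noness_vertices n \<subseteq> Pow {0..<n}"
    unfolding noness_vertices_def ess_vertices_def zn_ideal_def by auto
qed simp

end

section \<open>Counting the nonessential ideals\<close>

lemma finite_G_vertices: "finite (G_vertices k)"
  by (rule finite_subset[of _ "Pow {..<k}"]) (auto simp: G_vertices_def)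

lemma Pow_lessThan_eq_G_vertices:
  assumes "0 < k"
  shows "Pow {..<k} = insert {} (insert {..<k} (G_vertices k))"
    and "{} \<notin> insert {..<k} (G_vertices k)" and "{..<k} \<notin> G_vertices k"
  using assms unfolding G_vertices_def by auto

lemma card_G_vertices:
  assumes "0 < k"
  shows "card (G_vertices k) + 2 = 2 ^ k"
  using card_Pow[of "{..<k}"] finite_G_vertices Pow_lessThan_eq_G_vertices[OF assms] by simp

lemma sum_n_class_G_vertices:
  assumes "0 < k"
  shows "(\<Sum>S\<in>G_vertices k. n_class k m S) + (\<Prod>i<k. m i) + 1 = (\<Prod>i<k. m i + 1)"
proof -
  have "(\<Prod>i<k. m i + 1) = (\<Prod>i<k. 1 + m i)" by (simp add: add.commute)
  also have "\<dots> = (\<Sum>S\<in>Pow {..<k}. (\<Prod>i\<in>S. 1) * (\<Prod>i\<in>{..<k} - S. m i))" by (rule prod_add) simp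
  also have "\<dots> = (\<Sum>S\<in>Pow {..<k}. n_class k m S)" unfolding n_class_def by simp
  also have "\<dots> = n_class k m {} + (n_class k m {..<k} + (\<Sum>S\<in>G_vertices k. n_class k m S))"
    using finite_G_vertices Pow_lessThan_eq_G_vertices[OF assms] by simp
  finally show ?thesis unfolding n_class_def by simp
qed

context factored_modulus
begin

lemma Xi_zn_multiples_prime_power_prod:
  assumes r: "\<And>i. i < k \<Longrightarrow> r i \<le> m i"
  shows "Xi (zn_multiples n (prime_power_prod r)) = {j. j < k \<and> m j \<le> r j}"
proof -
  have "prime_power_prod r dvd n" unfolding n_eq using r by (intro prime_power_prod_dvd_mono)
  moreover have "p j ^ m j dvd prime_power_prod r \<longleftrightarrow> m j \<le> r j" if "j < k" for j
    using prime_power_dvd_iff[OF _ that] prime_power_prod_pos multiplicity_prime_power_prod[OF that]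
    by (metis less_irrefl)
  ultimately show ?thesis using Xi_zn_multiples by auto
qed

lemma bij_betw_exponents_Xi_fiber:
  assumes S: "S \<subseteq> {..<k}"
  shows "bij_betw (\<lambda>r. zn_multiples n (prime_power_prod r))
    (\<Pi>\<^sub>E i\<in>{..<k}. if i \<in> S then {m i} else {0..<m i}) {I. zn_ideal n I \<and> Xi I = S}"
proof -
  define P where "P = (\<Pi>\<^sub>E i\<in>{..<k}. if i \<in> S then {m i} else {0..<m i})"
  have P_iff: "r \<in> P \<longleftrightarrow> r \<in> extensional {..<k} \<and> (\<forall>i<k. r i \<le> m i \<and> (m i \<le> r i \<longleftrightarrow> i \<in> S))" for r
    unfolding P_def PiE_def Pi_def by (auto split: if_splits)
  have dvd_n: "prime_power_prod r dvd n" if "r \<in> P" for r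
    using that unfolding P_iff n_eq by (intro prime_power_prod_dvd_mono) auto
  have "inj_on (\<lambda>r. zn_multiples n (prime_power_prod r)) P"
  proof (rule inj_onI)
    fix r s assume r: "r \<in> P" and s: "s \<in> P"
      and "zn_multiples n (prime_power_prod r) = zn_multiples n (prime_power_prod s)"
    hence "prime_power_prod r = prime_power_prod s" using zn_multiples_inj n_pos dvd_n by blast
    hence "r j = s j" if "j < k" for j using multiplicity_prime_power_prod[OF that] by metis
    thus "r = s" using r s unfolding P_def by (intro PiE_ext) auto
  qed
  moreover have "(\<lambda>r. zn_multiples n (prime_power_prod r)) ` P = {I. zn_ideal n I \<and> Xi I = S}"
  proof (intro equalityI subsetI)
    fix I assume "I \<in> (\<lambda>r. zn_multiples n (prime_power_prod r)) ` P"
    then obtain r where r: "r \<in> P" "I = zn_multiples n (prime_power_prod r)" by blast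
    hence "Xi I = {j. j < k \<and> m j \<le> r j}" using Xi_zn_multiples_prime_power_prod P_iff by auto
    also have "\<dots> = S" using r(1) S unfolding P_iff by auto
    finally show "I \<in> {I. zn_ideal n I \<and> Xi I = S}" using zn_ideal_multiples[OF dvd_n[OF r(1)] n_pos] r(2) by auto
  next
    fix I assume "I \<in> {I. zn_ideal n I \<and> Xi I = S}"
    hence I: "zn_ideal n I" "Xi I = S" by auto
    obtain d where d: "d dvd n" "I = zn_multiples n d" using zn_ideal_eq_multiples[OF I(1) n_pos] .
    define r where "r = restrict (\<lambda>i. multiplicity (p i) d) {..<k}"
    have "prime_power_prod r = d"
      using divisor_eq_prime_power_prod[OF d(1)] unfolding r_def prime_power_prod_def by simp
    moreover have "r i \<le> m i" if "i < k" for i using multiplicity_divisor_le[OF d(1) that] that by (simp add: r_def)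
    ultimately have "r \<in> P"
      using I(2) Xi_zn_multiples_prime_power_prod[of r] unfolding P_iff d(2) by (auto simp: r_def)
    with \<open>prime_power_prod r = d\<close> show "I \<in> (\<lambda>r. zn_multiples n (prime_power_prod r)) ` P"
      unfolding d(2) by force
  qed
  ultimately show ?thesis unfolding bij_betw_def P_def by blast
qed

lemma n_class_pos: "0 < n_class k m S"
  unfolding n_class_def using mpos by (intro prod_pos) auto

lemma card_Xi_fiber:
  assumes S: "S \<in> G_vertices k"
  shows "card {I \<in> noness_vertices n. Xi I = S} = n_class k m S"
proof -
  have Sk: "S \<subseteq> {..<k}" using S unfolding G_vertices_def by auto
  have "{I \<in> noness_vertices n. Xi I = S} = {I. zn_ideal n I \<and> Xi I = S}"
    using S unfolding noness_vertices_eq by auto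
  also have "card \<dots> = card (\<Pi>\<^sub>E i\<in>{..<k}. if i \<in> S then {m i} else {0..<m i})"
    using bij_betw_same_card[OF bij_betw_exponents_Xi_fiber[OF Sk]] by simp
  also have "\<dots> = (\<Prod>i<k. if i \<in> S then 1 else m i)" by (auto simp: card_PiE intro!: prod.cong)
  also have "\<dots> = n_class k m S" unfolding n_class_def by (subst prod.If_cases) (auto simp: Diff_eq)
  finally show ?thesis .
qed

lemma card_noness_vertices: "card (noness_vertices n) = (\<Sum>S\<in>G_vertices k. n_class k m S)"
proof -
  have "(\<Union>S\<in>G_vertices k. {I \<in> noness_vertices n. Xi I = S}) = noness_vertices n"
    unfolding noness_vertices_eq by blast
  moreover have "card (\<Union>S\<in>G_vertices k. {I \<in> noness_vertices n. Xi I = S})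
      = (\<Sum>S\<in>G_vertices k. card {I \<in> noness_vertices n. Xi I = S})"
    by (rule card_UN_disjoint) (use finite_G_vertices finite_noness_vertices in auto)
  ultimately show ?thesis using card_Xi_fiber by simp
qed

lemma card_G_vertices_le: "card (G_vertices k) \<le> card (noness_vertices n)"
proof -
  have "card (G_vertices k) = (\<Sum>S\<in>G_vertices k. 1)" by simp
  also have "\<dots> \<le> (\<Sum>S\<in>G_vertices k. n_class k m S)" using n_class_pos by (intro sum_mono) (simp add: Suc_le_eq)
  finally show ?thesis using card_noness_vertices by simp
qed

lemma card_noness_vertices_minus_card_G_vertices:
  assumes "0 < k"
  shows "int (card (noness_vertices n)) - int (card (G_vertices k)) =
    ((\<Prod>i<k. int (m i) + 1) - 2) - ((\<Prod>i<k. int (m i)) - 1) - (2 ^ k - 2)"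
proof -
  have "(\<Prod>i<k. int (m i) + 1) = int (\<Prod>i<k. m i + 1)" "(\<Prod>i<k. int (m i)) = int (\<Prod>i<k. m i)"
    by (simp_all add: add.commute)
  moreover have "int (\<Sum>S\<in>G_vertices k. n_class k m S) + int (\<Prod>i<k. m i) + 1 = int (\<Prod>i<k. m i + 1)"
    using sum_n_class_G_vertices[OF assms, of m] by (metis of_nat_1 of_nat_add)
  moreover have "int (card (G_vertices k)) + 2 = 2 ^ k"
    using card_G_vertices[OF assms] by (metis of_nat_add of_nat_numeral of_nat_power)
  ultimately show ?thesis using card_noness_vertices by linarith
qed

end

section \<open>Characteristic polynomials of blow-ups\<close>

lemma char_poly_matrix_mult:
  fixes A :: "'a :: comm_ring_1 mat"
  assumes A: "A \<in> carrier_mat a c" and B: "B \<in> carrier_mat c a"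
  shows "char_poly_matrix (A * B) = [:0,1:] \<cdot>\<^sub>m 1\<^sub>m a - map_mat (\<lambda>x. [:x:]) A * map_mat (\<lambda>x. [:x:]) B"
proof -
  have "map_mat (\<lambda>x. [:x:]) A * map_mat (\<lambda>x. [:x:]) B = map_mat (\<lambda>x. [:x:]) (A * B)"
    using map_poly_mult(1)[OF A B] by simp
  thus ?thesis using A B unfolding char_poly_matrix_def by (intro eq_matI) auto
qed

text \<open>Block-matrix proof of Sylvester's identity \<open>X\<^sup>c \<chi>\<^sub>A\<^sub>B = X\<^sup>a \<chi>\<^sub>B\<^sub>A\<close>: with
  \<open>M = [X I, A; B, I]\<close>, elimination from the left by \<open>[I, -A; 0, I]\<close> and by \<open>[I, 0; -B, X I]\<close>
  makes \<open>M\<close> block triangular in two ways.\<close>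
lemma char_poly_mult_commute:
  fixes A :: "'a :: idom mat"
  assumes A: "A \<in> carrier_mat a c" and B: "B \<in> carrier_mat c a"
  shows "char_poly (A * B) * [:0,1:] ^ c = [:0,1:] ^ a * char_poly (B * A)"
proof -
  define X :: "'a poly" where "X = [:0,1:]"
  define A' where "A' = map_mat (\<lambda>x. [:x:]) A"
  define B' where "B' = map_mat (\<lambda>x. [:x:]) B"
  have A': "A' \<in> carrier_mat a c" and B': "B' \<in> carrier_mat c a"
    using A B unfolding A'_def B'_def by auto
  have AB': "A' * B' \<in> carrier_mat a a" and BA': "B' * A' \<in> carrier_mat c c" using A' B' by auto
  define M where "M = four_block_mat (X \<cdot>\<^sub>m 1\<^sub>m a) A' B' (1\<^sub>m c)"
  define L where "L = four_block_mat (1\<^sub>m a) (- A') (0\<^sub>m c a) (1\<^sub>m c)"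
  define Q where "Q = four_block_mat (1\<^sub>m a) (0\<^sub>m a c) (- B') (X \<cdot>\<^sub>m 1\<^sub>m c)"
  have M: "M \<in> carrier_mat (a + c) (a + c)" and L: "L \<in> carrier_mat (a + c) (a + c)"
    and Q: "Q \<in> carrier_mat (a + c) (a + c)"
    unfolding M_def L_def Q_def using A' B' by auto
  have "L * M = four_block_mat (1\<^sub>m a * (X \<cdot>\<^sub>m 1\<^sub>m a) + - A' * B') (1\<^sub>m a * A' + - A' * 1\<^sub>m c)
      (0\<^sub>m c a * (X \<cdot>\<^sub>m 1\<^sub>m a) + 1\<^sub>m c * B') (0\<^sub>m c a * A' + 1\<^sub>m c * 1\<^sub>m c)"
    unfolding L_def M_def by (rule mult_four_block_mat) (use A' B' in auto)
  also have "\<dots> = four_block_mat (X \<cdot>\<^sub>m 1\<^sub>m a - A' * B') (0\<^sub>m a c) B' (1\<^sub>m c)"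
    using A' B' AB' by (intro arg_cong4[where f = four_block_mat] eq_matI) auto
  finally have LM: "L * M = four_block_mat (X \<cdot>\<^sub>m 1\<^sub>m a - A' * B') (0\<^sub>m a c) B' (1\<^sub>m c)" .
  have "Q * M = four_block_mat (1\<^sub>m a * (X \<cdot>\<^sub>m 1\<^sub>m a) + 0\<^sub>m a c * B') (1\<^sub>m a * A' + 0\<^sub>m a c * 1\<^sub>m c)
      (- B' * (X \<cdot>\<^sub>m 1\<^sub>m a) + X \<cdot>\<^sub>m 1\<^sub>m c * B') (- B' * A' + X \<cdot>\<^sub>m 1\<^sub>m c * 1\<^sub>m c)"
    unfolding Q_def M_def by (rule mult_four_block_mat) (use A' B' in auto)
  also have "\<dots> = four_block_mat (X \<cdot>\<^sub>m 1\<^sub>m a) A' (0\<^sub>m c a) (X \<cdot>\<^sub>m 1\<^sub>m c - B' * A')"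
    using A' B' BA' by (intro arg_cong4[where f = four_block_mat] eq_matI) auto
  finally have QM: "Q * M = four_block_mat (X \<cdot>\<^sub>m 1\<^sub>m a) A' (0\<^sub>m c a) (X \<cdot>\<^sub>m 1\<^sub>m c - B' * A')" .
  have "det L = 1"
    unfolding L_def using A' by (subst det_four_block_mat_lower_left_zero) auto
  moreover have "det (L * M) = char_poly (A * B)"
    unfolding LM char_poly_def char_poly_matrix_mult[OF A B] X_def A'_def B'_def
    using A' B' by (subst det_four_block_mat_upper_right_zero) (auto simp: A'_def B'_def)
  ultimately have detM: "det M = char_poly (A * B)" using det_mult[OF L M] by simp
  have "det Q = X ^ c"
    unfolding Q_def using B' by (subst det_four_block_mat_upper_right_zero) auto
  moreover have "det (Q * M) = X ^ a * char_poly (B * A)"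
    unfolding QM char_poly_def char_poly_matrix_mult[OF B A] X_def A'_def B'_def
    using A' B' by (subst det_four_block_mat_lower_left_zero) (auto simp: A'_def B'_def)
  ultimately show ?thesis using det_mult[OF Q M] detM unfolding X_def by (simp add: mult.commute)
qed

definition class_size :: "nat \<Rightarrow> (nat \<Rightarrow> nat) \<Rightarrow> nat \<Rightarrow> nat" where
  "class_size a J j = card {i. i < a \<and> J i = j}"

definition normalized_incidence :: "nat \<Rightarrow> nat \<Rightarrow> (nat \<Rightarrow> nat) \<Rightarrow> complex mat" where
  "normalized_incidence a b J =
     mat a b (\<lambda>(i, j). if J i = j then complex_of_real (1 / sqrt (real (class_size a J j))) else 0)"

lemma normalized_incidence_carrier: "normalized_incidence a b J \<in> carrier_mat a b"
  unfolding normalized_incidence_def by simp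

lemma transpose_normalized_incidence_mult:
  assumes pos: "\<And>j. j < b \<Longrightarrow> 0 < class_size a J j"
  shows "transpose_mat (normalized_incidence a b J) * normalized_incidence a b J = 1\<^sub>m b"
proof (rule eq_matI)
  fix j j' assume "j < dim_row (1\<^sub>m b)" "j' < dim_col (1\<^sub>m b)"
  hence j: "j < b" "j' < b" by auto
  let ?N = "normalized_incidence a b J" and ?w = "\<lambda>j. complex_of_real (1 / sqrt (real (class_size a J j)))"
  have "(transpose_mat ?N * ?N) $$ (j, j') = (\<Sum>i<a. ?N $$ (i, j) * ?N $$ (i, j'))"
    using j normalized_incidence_carrier[of a b J] by (simp add: scalar_prod_def lessThan_atLeast0)
  also have "\<dots> = (\<Sum>i | i < a \<and> J i = j. if j = j' then ?w j * ?w j else 0)"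
    using j by (intro sum.mono_neutral_cong_right) (auto simp: normalized_incidence_def)
  also have "\<dots> = 1\<^sub>m b $$ (j, j')"
  proof (cases "j = j'")
    case True
    have "?w j * ?w j = 1 / of_nat (class_size a J j)"
      by (simp flip: of_real_mult add: real_sqrt_mult_self)
    thus ?thesis using True j pos[OF j(1)] unfolding class_size_def by (simp add: card_gt_0_iff)
  qed (use j in simp)
  finally show "(transpose_mat ?N * ?N) $$ (j, j') = 1\<^sub>m b $$ (j, j')" .
qed (simp_all add: normalized_incidence_def)

lemma normalized_incidence_conj:
  fixes K :: "nat \<Rightarrow> nat \<Rightarrow> complex"
  assumes J: "\<And>i. i < a \<Longrightarrow> J i < b" and pos: "\<And>j. j < b \<Longrightarrow> 0 < class_size a J j"
  defines "N \<equiv> normalized_incidence a b J"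
  shows "N * mat b b (\<lambda>(j, j'). complex_of_real (sqrt (real (class_size a J j * class_size a J j'))) * K j j')
      * transpose_mat N = mat a a (\<lambda>(i, i'). K (J i) (J i'))"
proof -
  let ?w = "\<lambda>j. complex_of_real (sqrt (real (class_size a J j)))"
  define C where "C = mat b b (\<lambda>(j, j'). complex_of_real (sqrt (real (class_size a J j * class_size a J j'))) * K j j')"
  have N: "N \<in> carrier_mat a b" unfolding N_def by (rule normalized_incidence_carrier)
  \<comment> \<open>Row \<open>i\<close> of \<open>N\<close> has the single nonzero entry \<open>1 / w (J i)\<close>, in column \<open>J i\<close>.\<close>
  have row: "(\<Sum>j<b. N $$ (i, j) * f j) = f (J i) / ?w (J i)" if "i < a" for i and f :: "nat \<Rightarrow> complex"
  proof -
    have "(\<Sum>j<b. N $$ (i, j) * f j) = (\<Sum>j<b. if j = J i then f (J i) / ?w (J i) else 0)"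
      using that by (intro sum.cong) (auto simp: N_def normalized_incidence_def real_sqrt_divide divide_inverse)
    thus ?thesis using J[OF that] by simp
  qed
  have "(N * C * transpose_mat N) $$ (i, i') = K (J i) (J i')" if i: "i < a" "i' < a" for i i'
  proof -
    have "(N * C) $$ (i, j') = C $$ (J i, j') / ?w (J i)" if "j' < b" for j'
      using row[OF i(1), of "\<lambda>j. C $$ (j, j')"] i that N by (simp add: scalar_prod_def C_def lessThan_atLeast0)
    hence "(N * C * transpose_mat N) $$ (i, i') = (\<Sum>j'<b. N $$ (i', j') * (C $$ (J i, j') / ?w (J i)))"
      using i N by (simp add: scalar_prod_def lessThan_atLeast0 mult.commute C_def)
    also have "\<dots> = C $$ (J i, J i') / ?w (J i) / ?w (J i')" by (rule row[OF i(2)])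
    also have "\<dots> = K (J i) (J i')"
      using J i pos[OF J[OF i(1)]] pos[OF J[OF i(2)]] by (simp add: C_def real_sqrt_mult)
    finally show ?thesis .
  qed
  thus ?thesis unfolding C_def[symmetric] using N by (intro eq_matI) (auto simp: C_def)
qed

lemma char_poly_blowup:
  fixes K :: "nat \<Rightarrow> nat \<Rightarrow> complex"
  assumes J: "\<And>i. i < a \<Longrightarrow> J i < b" and pos: "\<And>j. j < b \<Longrightarrow> 0 < class_size a J j"
  shows "char_poly (mat a a (\<lambda>(i, i'). K (J i) (J i'))) * [:0,1:] ^ b =
    [:0,1:] ^ a * char_poly (mat b b (\<lambda>(j, j'). complex_of_real (sqrt (real (class_size a J j * class_size a J j'))) * K j j'))"
proof -
  define N where "N = normalized_incidence a b J"
  define C where "C = mat b b (\<lambda>(j, j'). complex_of_real (sqrt (real (class_size a J j * class_size a J j'))) * K j j')"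
  have N: "N \<in> carrier_mat a b" and C: "C \<in> carrier_mat b b"
    unfolding N_def C_def by (simp_all add: normalized_incidence_carrier)
  have Nt: "transpose_mat N \<in> carrier_mat b a" using N by simp
  have "mat a a (\<lambda>(i, i'). K (J i) (J i')) = N * C * transpose_mat N"
    using normalized_incidence_conj[OF J pos, of K] unfolding N_def C_def by simp
  also have "\<dots> = N * (C * transpose_mat N)" by (rule assoc_mult_mat[OF N C Nt])
  finally have "mat a a (\<lambda>(i, i'). K (J i) (J i')) = N * (C * transpose_mat N)" .
  moreover have "C * transpose_mat N * N = C"
    using assoc_mult_mat[OF C Nt N] transpose_normalized_incidence_mult[OF pos] C
    unfolding N_def by simp
  moreover have "char_poly (N * (C * transpose_mat N)) * [:0,1:] ^ b = [:0,1:] ^ a * char_poly (C * transpose_mat N * N)"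
    using C Nt by (intro char_poly_mult_commute[OF N]) auto
  ultimately show ?thesis unfolding C_def[symmetric] by simp
qed

lemma index_mat_list:
  assumes "finite V"
  obtains xs where "distinct xs" "set xs = V" "length xs = card V"
    "\<And>A. index_mat V A = mat (card V) (card V) (\<lambda>(i, j). complex_of_real (A (xs ! i) (xs ! j)))"
proof -
  define xs where "xs = (SOME xs. distinct xs \<and> set xs = V)"
  have "distinct xs \<and> set xs = V"
    unfolding xs_def by (rule someI_ex) (use finite_distinct_list[OF assms] in auto)
  moreover have "index_mat V A = mat (card V) (card V) (\<lambda>(i, j). complex_of_real (A (xs ! i) (xs ! j)))" for A
    unfolding index_mat_def xs_def[symmetric] by simp
  ultimately show ?thesis by (intro that[of xs]) (auto simp: distinct_card)
qed

lemma index_mat_cong: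
  assumes "finite V" "\<And>v v'. v \<in> V \<Longrightarrow> v' \<in> V \<Longrightarrow> A v v' = A' v v'"
  shows "index_mat V A = index_mat V A'"
proof -
  obtain xs where xs: "set xs = V" "length xs = card V"
    "\<And>A. index_mat V A = mat (card V) (card V) (\<lambda>(i, j). complex_of_real (A (xs ! i) (xs ! j)))"
    using index_mat_list[OF assms(1)] by metis
  show ?thesis unfolding xs(3) using xs(1,2) assms(2) by (intro eq_matI) auto
qed

lemma list_position_map:
  assumes xs: "distinct xs" and ys: "distinct ys" and f: "f ` set xs = set ys"
  obtains J where "\<And>i. i < length xs \<Longrightarrow> J i < length ys \<and> ys ! J i = f (xs ! i)"
    and "\<And>j. j < length ys \<Longrightarrow> class_size (length xs) J j = card {v \<in> set xs. f v = ys ! j}"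
proof -
  have inj_ys: "inj_on ((!) ys) {..<length ys}" and img_ys: "(!) ys ` {..<length ys} = set ys"
    using bij_betw_nth[OF ys refl refl] by (simp_all add: bij_betw_def)
  define J where "J i = the_inv_into {..<length ys} ((!) ys) (f (xs ! i))" for i
  have J: "J i < length ys \<and> ys ! J i = f (xs ! i)" if "i < length xs" for i
  proof -
    have "f (xs ! i) \<in> (!) ys ` {..<length ys}" using img_ys f that by auto
    thus ?thesis using the_inv_into_into[OF inj_ys _ subset_refl] f_the_inv_into_f[OF inj_ys]
      unfolding J_def by auto
  qed
  have J_iff: "J i = j \<longleftrightarrow> f (xs ! i) = ys ! j" if "i < length xs" "j < length ys" for i j
    using J[OF that(1)] that(2) ys nth_eq_iff_index_eq by metis
  have "class_size (length xs) J j = card {v \<in> set xs. f v = ys ! j}" if j: "j < length ys" for j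
  proof -
    have "{v \<in> set xs. f v = ys ! j} = (!) xs ` {i. i < length xs \<and> J i = j}"
      using J_iff[OF _ j] by (auto simp: in_set_conv_nth)
    moreover have "inj_on ((!) xs) {i. i < length xs \<and> J i = j}" using xs by (simp add: inj_on_nth)
    ultimately show ?thesis unfolding class_size_def by (simp add: card_image)
  qed
  with J show ?thesis by (rule that)
qed

lemma char_poly_index_mat_blowup:
  fixes f :: "'v \<Rightarrow> 'w" and B :: "'w \<Rightarrow> 'w \<Rightarrow> real"
  assumes V: "finite V" and W: "finite W" and f: "f ` V = W"
  shows "char_poly (index_mat V (\<lambda>v v'. B (f v) (f v'))) * [:0,1:] ^ card W =
    [:0,1:] ^ card V * char_poly (index_mat W
      (\<lambda>w w'. sqrt (real (card {v \<in> V. f v = w} * card {v \<in> V. f v = w'})) * B w w'))"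
proof -
  obtain xs where xs: "distinct xs" "set xs = V" "length xs = card V"
    "\<And>A. index_mat V A = mat (card V) (card V) (\<lambda>(i, j). complex_of_real (A (xs ! i) (xs ! j)))"
    using index_mat_list[OF V] by metis
  obtain ys where ys: "distinct ys" "set ys = W" "length ys = card W"
    "\<And>A. index_mat W A = mat (card W) (card W) (\<lambda>(i, j). complex_of_real (A (ys ! i) (ys ! j)))"
    using index_mat_list[OF W] by metis
  obtain J where J: "\<And>i. i < card V \<Longrightarrow> J i < card W \<and> ys ! J i = f (xs ! i)"
    and class_size: "\<And>j. j < card W \<Longrightarrow> class_size (card V) J j = card {v \<in> V. f v = ys ! j}"
    using list_position_map[OF xs(1) ys(1)] f unfolding xs(2,3) ys(2,3) by metis
  have "0 < class_size (card V) J j" if j: "j < card W" for j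
  proof -
    have "ys ! j \<in> f ` V" using j ys(2,3) f by auto
    thus ?thesis unfolding class_size[OF j] using V by (auto simp: card_gt_0_iff)
  qed
  note blowup = char_poly_blowup[OF conjunct1[OF J] this, of "\<lambda>j j'. complex_of_real (B (ys ! j) (ys ! j'))"]
  have "mat (card V) (card V) (\<lambda>(i, i'). complex_of_real (B (ys ! J i) (ys ! J i')))
      = index_mat V (\<lambda>v v'. B (f v) (f v'))"
    unfolding xs(4) using J by (intro eq_matI) auto
  moreover have "mat (card W) (card W) (\<lambda>(j, j'). complex_of_real (sqrt (real (class_size (card V) J j *
        class_size (card V) J j'))) * complex_of_real (B (ys ! j) (ys ! j')))
      = index_mat W (\<lambda>w w'. sqrt (real (card {v \<in> V. f v = w} * card {v \<in> V. f v = w'})) * B w w')"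
    unfolding ys(4) using class_size by (intro eq_matI) (auto simp flip: of_real_mult)
  ultimately show ?thesis using blowup by simp
qed

lemma proots_eq_zeros_plus:
  fixes p q :: "'a :: idom poly"
  assumes pq: "p * [:0,1:] ^ b = [:0,1:] ^ a * q" and q: "q \<noteq> 0" and ba: "b \<le> a"
  shows "proots p = replicate_mset (a - b) 0 + proots q"
proof -
  have "p * [:0,1:] ^ b = ([:0,1:] ^ (a - b) * q) * [:0,1:] ^ b"
    using pq ba by (simp add: power_add[symmetric] mult_ac)
  hence "p = [:0,1:] ^ (a - b) * q" by (rule mult_right_cancel[THEN iffD1, rotated]) simp
  thus ?thesis using q by (simp add: proots_mult proots_power repeat_mset_replicate_mset)
qed

lemma mat_spectrum_blowup:
  fixes f :: "'v \<Rightarrow> 'w" and B :: "'w \<Rightarrow> 'w \<Rightarrow> real"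
  assumes "finite V" "finite W" "f ` V = W"
  shows "mat_spectrum V (\<lambda>v v'. B (f v) (f v')) = replicate_mset (card V - card W) 0 +
    mat_spectrum W (\<lambda>w w'. sqrt (real (card {v \<in> V. f v = w} * card {v \<in> V. f v = w'})) * B w w')"
proof -
  let ?C = "index_mat W (\<lambda>w w'. sqrt (real (card {v \<in> V. f v = w} * card {v \<in> V. f v = w'})) * B w w')"
  have "?C \<in> carrier_mat (card W) (card W)" unfolding index_mat_def by (simp add: Let_def)
  hence "coeff (char_poly ?C) (card W) = 1" using degree_monic_char_poly by blast
  hence "char_poly ?C \<noteq> 0" by auto
  moreover have "card W \<le> card V" using assms card_image_le by blast
  ultimately show ?thesis unfolding mat_spectrum_def
    using char_poly_index_mat_blowup[OF assms, of B] by (intro proots_eq_zeros_plus) auto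
qed

section \<open>The spectrum\<close>

context factored_modulus
begin

lemma mat_spectrum_noness_vertices:
  "mat_spectrum (noness_vertices n) (\<lambda>I K. if ess_adj n I K then 1 else 0) =
    replicate_mset (card (noness_vertices n) - card (G_vertices k)) 0 + mat_spectrum (G_vertices k) (C_A k m)"
proof -
  define B :: "nat set \<Rightarrow> nat set \<Rightarrow> real" where "B S S' = (if S \<inter> S' = {} then 1 else 0)" for S S'
  have "Xi ` noness_vertices n \<subseteq> G_vertices k" unfolding noness_vertices_eq by auto
  moreover have "S \<in> Xi ` noness_vertices n" if "S \<in> G_vertices k" for S
  proof -
    have "card {I \<in> noness_vertices n. Xi I = S} \<noteq> 0" using card_Xi_fiber[OF that] n_class_pos[of S] by simp
    hence "{I \<in> noness_vertices n. Xi I = S} \<noteq> {}" by (metis card.empty)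
    thus ?thesis by blast
  qed
  ultimately have Xi_img: "Xi ` noness_vertices n = G_vertices k" by blast
  have "mat_spectrum (noness_vertices n) (\<lambda>I K. if ess_adj n I K then 1 else 0) =
      mat_spectrum (noness_vertices n) (\<lambda>I K. B (Xi I) (Xi K))"
    unfolding mat_spectrum_def B_def using ess_adj_iff by (simp cong: index_mat_cong[OF finite_noness_vertices])
  moreover have "mat_spectrum (G_vertices k) (C_A k m) = mat_spectrum (G_vertices k)
      (\<lambda>S S'. sqrt (real (card {I \<in> noness_vertices n. Xi I = S} * card {I \<in> noness_vertices n. Xi I = S'})) * B S S')"
    unfolding mat_spectrum_def B_def C_A_def
    by (intro arg_cong[where f = "\<lambda>M. proots (char_poly M)"] index_mat_cong[OF finite_G_vertices])
      (auto simp: card_Xi_fiber G_vertices_def)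
  ultimately show ?thesis
    using mat_spectrum_blowup[OF finite_noness_vertices finite_G_vertices Xi_img] by simp
qed

end

theorem mainTheorem8:
  fixes k n :: nat and p m :: "nat \<Rightarrow> nat"
  assumes primes: "\<forall>i<k. prime (p i)"
    and incr: "\<forall>i j. i < j \<and> j < k \<longrightarrow> p i < p j"
    and mpos: "\<forall>i<k. m i > 0"
    and n_def: "n = (\<Prod>i<k. p i ^ m i)"
    and some_big: "\<exists>i<k. m i > 1"
  shows "mat_spectrum (noness_vertices n) (\<lambda>I K. if ess_adj n I K then 1 else 0)
     = replicate_mset
         (nat (((\<Prod>i<k. int (m i) + 1) - 2) - ((\<Prod>i<k. int (m i)) - 1) - (2 ^ k - 2))) 0
       + mat_spectrum (G_vertices k) (C_A k m)"
proof -
  interpret factored_modulus k p m n using primes incr mpos n_def by unfold_locales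
  have "0 < k" using some_big by auto
  hence "int (card (noness_vertices n) - card (G_vertices k)) =
      ((\<Prod>i<k. int (m i) + 1) - 2) - ((\<Prod>i<k. int (m i)) - 1) - (2 ^ k - 2)"
    using card_noness_vertices_minus_card_G_vertices card_G_vertices_le by (simp add: of_nat_diff)
  thus ?thesis using mat_spectrum_noness_vertices by (metis nat_int)
qed

end
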